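(* Let $F$ be a finite group and let $N$ be a closed, normal, $\sigma$-stable subgroup of $F^{\mathbb{Z}}$ such that $N\cap F^{[\mathbb{Z}]}=\{1\}$. Then $N$ is finite and contained in the centre of $F^{\mathbb{Z}}$.
   Context: $F^{\mathbb{Z}}$ is the group of all functions $\mathbb{Z}\to F$ with pointwise multiplication and the product topology (with $F$ discrete); $F^{[\mathbb{Z}]}$ is its subgroup of finitely supported functions; $\sigma$ is the shift automorphism $\sigma(f)(n)=f(n+1)$; $N$ is $\sigma$-stable if $\sigma(N)=N$. *)

theory Defs
  imports "HOL-Analysis.Analysis" "HOL-Algebra.Coset"
begin

definition FZ :: "('a, 'b) monoid_scheme \<Rightarrow> (int \<Rightarrow> 'a) monoid" where
  "FZ F = \<lparr> carrier = {f. \<forall>n. f n \<in> carrier F},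
            mult = (\<lambda>f g n. f n \<otimes>\<^bsub>F\<^esub> g n),
            one = (\<lambda>n. \<one>\<^bsub>F\<^esub>) \<rparr>"

definition FZ_topology :: "('a, 'b) monoid_scheme \<Rightarrow> (int \<Rightarrow> 'a) topology" where
  "FZ_topology F = product_topology (\<lambda>_. discrete_topology (carrier F)) UNIV"

definition fin_supp :: "('a, 'b) monoid_scheme \<Rightarrow> (int \<Rightarrow> 'a) set" where
  "fin_supp F = {f \<in> carrier (FZ F). finite {n. f n \<noteq> \<one>\<^bsub>F\<^esub>}}"

definition shift :: "(int \<Rightarrow> 'a) \<Rightarrow> (int \<Rightarrow> 'a)" where
  "shift f = (\<lambda>n. f (n + 1))"

definition center :: "('a, 'b) monoid_scheme \<Rightarrow> 'a set" where
  "center G = {z \<in> carrier G. \<forall>g \<in> carrier G. z \<otimes>\<^bsub>G\<^esub> g = g \<otimes>\<^bsub>G\<^esub> z}"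

end

(*
  The values at 0 of elements of N that are trivial on [1, k] form a
  decreasing family of subsets of F, which stabilises at some M; by compactness each of them is
  then the value at 0 of an element trivial on all of [1, oo). Such an element is trivial: by
  pigeonhole it has two equal windows of length M arbitrarily far to the left, and dividing it by
  the translate matching them gives an element trivial on a window and eventually trivial to the
  right, which another compactness argument shows to be trivial to the right of the window; so
  the element is periodic from there on, hence trivial. Thus elements of N trivial on [1, M] are
  trivial at 0, and with the mirror image of this argument an element trivial on a window of
  fixed length is trivial, so N embeds into a finite power of F. Finally, conjugating x in N by
  an element supported at one coordinate n changes x only at n, so the quotient is finitely
  supported, hence trivial, and x n commutes with F.
*)

theory Submission
  imports Defs
begin

lemma carrier_FZ: "carrier (FZ F) = {f. \<forall>n. f n \<in> carrier F}"
  and mult_FZ: "x \<otimes>\<^bsub>FZ F\<^esub> y = (\<lambda>n. x n \<otimes>\<^bsub>F\<^esub> y n)"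
  and one_FZ: "\<one>\<^bsub>FZ F\<^esub> = (\<lambda>n. \<one>\<^bsub>F\<^esub>)"
  by (simp_all add: FZ_def)

lemma group_FZ:
  assumes "group F"
  shows "group (FZ F)"
proof -
  interpret group F by fact
  show ?thesis
  proof (rule groupI)
    show "\<exists>y\<in>carrier (FZ F). y \<otimes>\<^bsub>FZ F\<^esub> x = \<one>\<^bsub>FZ F\<^esub>" if "x \<in> carrier (FZ F)" for x
    proof
      show "(\<lambda>n. inv\<^bsub>F\<^esub> (x n)) \<in> carrier (FZ F)" "(\<lambda>n. inv\<^bsub>F\<^esub> (x n)) \<otimes>\<^bsub>FZ F\<^esub> x = \<one>\<^bsub>FZ F\<^esub>"
        using that by (auto simp: carrier_FZ mult_FZ one_FZ)
    qed
  qed (auto simp: carrier_FZ mult_FZ one_FZ m_assoc)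
qed

lemma inv_FZ:
  assumes "group F" "x \<in> carrier (FZ F)"
  shows "inv\<^bsub>FZ F\<^esub> x = (\<lambda>n. inv\<^bsub>F\<^esub> (x n))"
proof -
  interpret group F by fact
  show ?thesis
    using assms(2) by (intro group.inv_equality[OF group_FZ[OF assms(1)]])
      (auto simp: carrier_FZ mult_FZ one_FZ)
qed

lemma topspace_FZ_topology: "topspace (FZ_topology F) = carrier (FZ F)"
  by (auto simp: FZ_topology_def carrier_FZ PiE_UNIV_domain)

lemma compact_space_FZ_topology: "finite (carrier F) \<Longrightarrow> compact_space (FZ_topology F)"
  unfolding FZ_topology_def
  by (simp add: compact_space_product_topology compact_space_discrete_topology)

lemma closedin_FZ_topology_box:
  assumes "\<And>i. C i \<subseteq> carrier F"
  shows "closedin (FZ_topology F) {f. \<forall>i. f i \<in> C i}"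
proof -
  have "{f. \<forall>i. f i \<in> C i} = PiE UNIV C" by (auto simp: PiE_UNIV_domain)
  then show ?thesis
    unfolding FZ_topology_def using assms by (simp add: closedin_product_topology)
qed

lemma closedin_FZ_topology_nested_boxes:
  assumes "finite (carrier F)" "closedin (FZ_topology F) N"
    and "\<And>m i. C m i \<subseteq> carrier F"
    and "\<And>m i. C (Suc m) i \<subseteq> C m i"
    and "\<And>m. \<exists>x\<in>N. \<forall>i. x i \<in> C m i"
  shows "\<exists>x\<in>N. \<forall>m i. x i \<in> C m i"
proof -
  define S where "S m = N \<inter> {f. \<forall>i. f i \<in> C m i}" for m
  have "(\<Inter>m. S m) \<noteq> {}"
  proof (rule compact_space_imp_nest[OF compact_space_FZ_topology[OF assms(1)]])
    show "closedin (FZ_topology F) (S m)" for m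
      unfolding S_def by (intro closedin_Int assms closedin_FZ_topology_box)
    show "S m \<noteq> {}" for m
      using assms(5)[of m] unfolding S_def by auto
    have "C n i \<subseteq> C m i" if "m \<le> n" for m n i
      using that by (induction n rule: dec_induct) (use assms(4) in auto)
    then show "decseq S"
      unfolding decseq_def S_def by blast
  qed
  then show ?thesis
    unfolding S_def by auto
qed

lemma translate_mem_if_shift_stable:
  assumes "shift ` N = N" "x \<in> N"
  shows "(\<lambda>n. x (n + k)) \<in> N"
proof (induction k rule: int_induct[where k = 0])
  case base
  show ?case using assms(2) by simp
next
  case (step1 i)
  then have "shift (\<lambda>n. x (n + i)) \<in> N"
    using assms(1) by blast
  then show ?case
    by (simp add: shift_def ac_simps)
next
  case (step2 i)
  then obtain g where g: "g \<in> N" "(\<lambda>n. x (n + i)) = shift g"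
    using assms(1) by (metis imageE)
  have "g n = x (n + (i - 1))" for n
    using fun_cong[OF g(2), of "n - 1"] by (simp add: shift_def algebra_simps)
  then have "g = (\<lambda>n. x (n + (i - 1)))"
    by (simp add: fun_eq_iff)
  with g(1) show ?case
    by simp
qed

lemma ex_repeated_window:
  fixes x :: "int \<Rightarrow> 'a"
  assumes "finite S" "\<And>n. x n \<in> S"
  shows "\<exists>a b. a < b \<and> b \<le> T \<and> (\<forall>i<M. x (a + int i) = x (b + int i))"
proof -
  define window where "window j = restrict (\<lambda>i. x (j + int i)) {..<M}" for j
  have "window ` {..T} \<subseteq> PiE {..<M} (\<lambda>_. S)"
    unfolding window_def using assms(2) by (intro image_subsetI) (simp add: restrict_PiE_iff)
  then have "finite (window ` {..T})"
    using assms(1) by (meson finite_PiE finite_lessThan finite_subset)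
  then have "\<not> inj_on window {..T}"
    using finite_imageD infinite_Iic by blast
  then obtain a b where ab: "a \<in> {..T}" "b \<in> {..T}" "a < b" "window a = window b"
    unfolding inj_on_def by (metis linorder_neq_iff)
  have "x (a + int i) = x (b + int i)" if "i < M" for i
    using fun_cong[OF ab(4), of i] that by (simp add: window_def)
  then show ?thesis
    using ab by auto
qed

lemma periodic_eventually_const:
  fixes f :: "int \<Rightarrow> 'a" and p :: int
  assumes "p > 0" "\<And>m. m \<ge> a \<Longrightarrow> f (m + p) = f m" "\<And>m. m \<ge> 1 \<Longrightarrow> f m = c" "t \<ge> a"
  shows "f t = c"
proof -
  have "f (t + int k * p) = f t" for k
  proof (induction k)
    case (Suc k)
    have "t + int k * p \<ge> a"
      using assms(1,4) by (smt (verit) mult_nonneg_nonneg of_nat_0_le_iff)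
    then have "f (t + int k * p + p) = f t"
      using Suc assms(2) by simp
    then show ?case
      by (simp add: algebra_simps)
  qed simp
  moreover have "t + int (nat (1 - t)) * p \<ge> 1"
  proof (cases "t \<ge> 1")
    case False
    have "(1 - t) * 1 \<le> (1 - t) * p"
      using assms(1) False by (intro mult_left_mono) auto
    moreover have "int (nat (1 - t)) = 1 - t"
      using False by simp
    ultimately show ?thesis
      by simp
  qed (use assms(1) in simp)
  ultimately show ?thesis
    using assms(3) by metis
qed

lemma int_window_induct:
  fixes P :: "int \<Rightarrow> bool" and W :: nat
  assumes window: "\<And>n. 1 \<le> n \<Longrightarrow> n \<le> int W \<Longrightarrow> P n"
    and right: "\<And>k. (\<And>n. k < n \<Longrightarrow> n \<le> k + int W \<Longrightarrow> P n) \<Longrightarrow> P k"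
    and left: "\<And>k. (\<And>n. k - int W \<le> n \<Longrightarrow> n < k \<Longrightarrow> P n) \<Longrightarrow> P k"
  shows "P m"
proof -
  have "\<forall>n. 1 - int d \<le> n \<and> n \<le> int W + int d \<longrightarrow> P n" for d
  proof (induction d)
    case (Suc d)
    have "P (int W + int d + 1)"
    proof (rule left)
      show "P n" if "int W + int d + 1 - int W \<le> n" "n < int W + int d + 1" for n
        using that by (intro Suc.IH[rule_format] conjI) linarith+
    qed
    moreover have "P (- int d)"
    proof (rule right)
      show "P n" if "- int d < n" "n \<le> - int d + int W" for n
        using that by (intro Suc.IH[rule_format] conjI) linarith+
    qed
    ultimately show ?case
      using Suc by (smt (verit) of_nat_Suc)
  qed (use window in simp)
  moreover have "1 - int (Suc (nat \<bar>m\<bar>)) \<le> m \<and> m \<le> int W + int (Suc (nat \<bar>m\<bar>))"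
    by (cases "m \<ge> 0") auto
  ultimately show ?thesis
    by blast
qed

locale group_shift = group F for F :: "('a, 'b) monoid_scheme" (structure) +
  fixes N :: "(int \<Rightarrow> 'a) set"
  assumes finite_carrier: "finite (carrier F)"
    and N_carrier: "x \<in> N \<Longrightarrow> x n \<in> carrier F"
    and N_mult: "x \<in> N \<Longrightarrow> y \<in> N \<Longrightarrow> (\<lambda>n. x n \<otimes> y n) \<in> N"
    and N_inv: "x \<in> N \<Longrightarrow> (\<lambda>n. inv (x n)) \<in> N"
    and N_translate: "x \<in> N \<Longrightarrow> (\<lambda>n. x (n + k)) \<in> N"
    and N_closedin: "closedin (FZ_topology F) N"
begin

lemma N_div: "x \<in> N \<Longrightarrow> y \<in> N \<Longrightarrow> (\<lambda>n. x n \<otimes> inv (y n)) \<in> N"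
  by (intro N_mult N_inv)

lemma eq_if_div_eq_one: "a \<in> carrier F \<Longrightarrow> b \<in> carrier F \<Longrightarrow> a \<otimes> inv b = \<one> \<Longrightarrow> a = b"
  by (simp add: inv_solve_right')

definition preceding_values :: "nat \<Rightarrow> 'a set" where
  "preceding_values k = {x 0 | x. x \<in> N \<and> (\<forall>n. 1 \<le> n \<and> n \<le> int k \<longrightarrow> x n = \<one>)}"

lemma preceding_values_subset_carrier: "preceding_values k \<subseteq> carrier F"
  unfolding preceding_values_def using N_carrier by auto

lemma preceding_values_antimono: "k \<le> l \<Longrightarrow> preceding_values l \<subseteq> preceding_values k"
  unfolding preceding_values_def by auto

lemma preceding_values_stabilize:
  obtains M where "\<And>k. M \<le> k \<Longrightarrow> preceding_values k = preceding_values M"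
proof -
  obtain M where M: "\<And>k. card (preceding_values M) \<le> card (preceding_values k)"
    using ex_has_least_nat[where P = "\<lambda>_. True" and m = "\<lambda>k. card (preceding_values k)"] by blast
  have "preceding_values k = preceding_values M" if "M \<le> k" for k
  proof (rule card_subset_eq)
    show "finite (preceding_values M)"
      using preceding_values_subset_carrier finite_carrier finite_subset by blast
    show "preceding_values k \<subseteq> preceding_values M"
      using preceding_values_antimono that by blast
    then show "card (preceding_values k) = card (preceding_values M)"
      using M[of k] card_mono \<open>finite (preceding_values M)\<close> by (metis le_antisym)
  qed
  then show ?thesis
    using that by blast
qed

context
  fixes M :: nat
  assumes stable: "\<And>k. M \<le> k \<Longrightarrow> preceding_values k = preceding_values M"
begin

lemma preceding_value_extends:
  assumes a: "a \<in> preceding_values M"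
  obtains r where "r \<in> N" "r 0 = a" "\<And>n. n \<ge> 1 \<Longrightarrow> r n = \<one>"
proof -
  have a_carrier: "a \<in> carrier F"
    using a preceding_values_subset_carrier by blast
  define C where "C m i = (if i = 0 then {a} else if 1 \<le> i \<and> i \<le> int (M + m) then {\<one>} else carrier F)"
    for m :: nat and i :: int
  have "\<exists>x\<in>N. \<forall>m i. x i \<in> C m i"
  proof (rule closedin_FZ_topology_nested_boxes[OF finite_carrier N_closedin])
    show "C m i \<subseteq> carrier F" "C (Suc m) i \<subseteq> C m i" for m i
      using a_carrier by (auto simp: C_def)
    show "\<exists>x\<in>N. \<forall>i. x i \<in> C m i" for m
    proof -
      have "a \<in> preceding_values (M + m)"
        using stable[of "M + m"] a by simp
      then obtain x where "x \<in> N" "x 0 = a" "\<And>n. 1 \<le> n \<Longrightarrow> n \<le> int (M + m) \<Longrightarrow> x n = \<one>"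
        unfolding preceding_values_def by blast
      then show ?thesis
        using N_carrier by (auto simp: C_def)
    qed
  qed
  then obtain x where x: "x \<in> N" "\<And>m i. x i \<in> C m i"
    by blast
  show ?thesis
  proof (rule that[OF x(1)])
    show "x 0 = a"
      using x(2)[where m = 0 and i = 0] by (simp add: C_def)
    show "x n = \<one>" if "n \<ge> 1" for n
      using x(2)[where m = "nat n" and i = n] that by (simp add: C_def)
  qed
qed

text \<open>Cancelling the value just left of the window by a translate of an element from
  \<open>preceding_value_extends\<close> moves the window one step to the left without changing
  anything to its right; compactness yields the limit of these steps.\<close>
lemma left_truncation:
  assumes v: "v \<in> N" and v_window: "\<And>n. 1 \<le> n \<Longrightarrow> n \<le> int M \<Longrightarrow> v n = \<one>"
  obtains l where "l \<in> N" "\<And>n. n \<le> int M \<Longrightarrow> l n = \<one>" "\<And>n. n > int M \<Longrightarrow> l n = v n"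
proof -
  define C where "C m i = (if 1 - int m \<le> i \<and> i \<le> int M then {\<one>}
      else if i > int M then {v i} else carrier F)" for m :: nat and i :: int
  have "\<exists>x\<in>N. \<forall>m i. x i \<in> C m i"
  proof (rule closedin_FZ_topology_nested_boxes[OF finite_carrier N_closedin])
    show "C m i \<subseteq> carrier F" "C (Suc m) i \<subseteq> C m i" for m i
      using N_carrier[OF v] by (auto simp: C_def)
    show "\<exists>x\<in>N. \<forall>i. x i \<in> C m i" for m
    proof (induction m)
      case 0
      show ?case
        using v v_window N_carrier[OF v] by (auto simp: C_def)
    next
      case (Suc m)
      then obtain l where l: "l \<in> N" "\<And>i. l i \<in> C m i"
        by blast
      have "(\<lambda>n. l (n - int m)) \<in> N"
        using N_translate[OF l(1), of "- int m"] by simp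
      moreover have "l (n - int m) = \<one>" if "1 \<le> n" "n \<le> int M" for n
        using l(2)[of "n - int m"] that by (auto simp: C_def split: if_splits)
      ultimately have "l (- int m) \<in> preceding_values M"
        unfolding preceding_values_def by (intro CollectI exI[of _ "\<lambda>n. l (n - int m)"]) simp
      then obtain r where r: "r \<in> N" "r 0 = l (- int m)" "\<And>n. n \<ge> 1 \<Longrightarrow> r n = \<one>"
        using preceding_value_extends by blast
      define l' where "l' = (\<lambda>n. inv (r (n + int m)) \<otimes> l n)"
      have "l' \<in> N"
        unfolding l'_def by (intro N_mult N_inv N_translate r(1) l(1))
      moreover have "l' i \<in> C (Suc m) i" for i
      proof -
        consider "i \<ge> 1 - int m" | "i = - int m" | "i < - int m"
          by linarith
        then show ?thesis
        proof cases
          case 1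
          then have "l' i = l i"
            using r(3) N_carrier[OF l(1)] by (simp add: l'_def)
          moreover have "C (Suc m) i = C m i"
            using 1 by (auto simp: C_def)
          ultimately show ?thesis
            using l(2) by simp
        next
          case 2
          then show ?thesis
            using r(2) N_carrier[OF l(1)] by (simp add: l'_def C_def)
        next
          case 3
          then show ?thesis
            using N_carrier[OF l(1)] N_carrier[OF r(1)] by (simp add: l'_def C_def)
        qed
      qed
      ultimately show ?case
        by blast
    qed
  qed
  then obtain l where l: "l \<in> N" "\<And>m i. l i \<in> C m i"
    by blast
  show ?thesis
  proof (rule that[OF l(1)])
    show "l n = \<one>" if "n \<le> int M" for n
      using l(2)[where m = "nat (1 - n)" and i = n] that by (auto simp: C_def split: if_splits)
    show "l n = v n" if "n > int M" for n
      using l(2)[where m = 0 and i = n] that by (simp add: C_def)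
  qed
qed

end

end

locale sparse_group_shift = group_shift +
  assumes N_fin_supp_trivial: "x \<in> N \<Longrightarrow> finite {n. x n \<noteq> \<one>} \<Longrightarrow> x = (\<lambda>n. \<one>)"
begin

context
  fixes M :: nat
  assumes stable: "\<And>k. M \<le> k \<Longrightarrow> preceding_values k = preceding_values M"
begin

lemma trivial_on_right_if_eventually_trivial:
  assumes v: "v \<in> N" and v_window: "\<And>n. 1 \<le> n \<Longrightarrow> n \<le> int M \<Longrightarrow> v n = \<one>"
    and v_eventually: "\<And>n. n \<ge> K \<Longrightarrow> v n = \<one>" and "n \<ge> 1"
  shows "v n = \<one>"
proof -
  obtain l where l: "l \<in> N" "\<And>n. n \<le> int M \<Longrightarrow> l n = \<one>" "\<And>n. n > int M \<Longrightarrow> l n = v n"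
    using left_truncation[OF stable v v_window] by blast
  have "{n. l n \<noteq> \<one>} \<subseteq> {int M <..< K}"
    using l(2,3) v_eventually by (force simp: not_le)
  then have "l = (\<lambda>n. \<one>)"
    using N_fin_supp_trivial[OF l(1)] finite_subset by blast
  then show ?thesis
    using l(3) v_window \<open>n \<ge> 1\<close> by (metis not_le)
qed

text \<open>By pigeonhole, two windows of length M far to the left carry the same values; dividing
  by the translate that matches them, the previous lemma shows that the values are periodic from
  there on, hence trivial.\<close>
lemma trivial_if_trivial_on_right:
  assumes x: "x \<in> N" and x_right: "\<And>n. n \<ge> 1 \<Longrightarrow> x n = \<one>"
  shows "x t = \<one>"
proof -
  have "\<exists>a b. a < b \<and> b \<le> t - int M \<and> (\<forall>i<M. x (a + int i) = x (b + int i))"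
    by (rule ex_repeated_window[OF finite_carrier N_carrier[OF x]])
  then obtain a b where ab: "a < b" "b \<le> t - int M" "\<forall>i<M. x (a + int i) = x (b + int i)"
    by blast
  define p where "p = b - a"
  define w where "w = (\<lambda>n. x n \<otimes> inv (x (n + p)))"
  have w: "w \<in> N"
    unfolding w_def by (intro N_div x N_translate)
  have "w m = \<one>" if "m \<ge> a" for m
  proof -
    have window: "(\<lambda>n. w (n + (a - 1))) n = \<one>" if "1 \<le> n" "n \<le> int M" for n
    proof -
      define i where "i = nat (n - 1)"
      have "i < M" "n + (a - 1) = a + int i" "n + (a - 1) + p = b + int i"
        using that by (auto simp: i_def p_def)
      then have "x (n + (a - 1)) = x (n + (a - 1) + p)"
        using ab(3) by metis
      then show ?thesis
        using N_carrier[OF x] by (simp add: w_def)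
    qed
    have eventually: "(\<lambda>n. w (n + (a - 1))) n = \<one>" if "n \<ge> 2 - a" for n
      using that ab(1) x_right by (simp add: w_def p_def)
    have "(\<lambda>n. w (n + (a - 1))) (m - (a - 1)) = \<one>"
      using that by (intro trivial_on_right_if_eventually_trivial[where K = "2 - a", OF N_translate[OF w] window eventually]) simp_all
    then show ?thesis
      by simp
  qed
  then have periodic: "x (m + p) = x m" if "m \<ge> a" for m
    using that eq_if_div_eq_one N_carrier[OF x] unfolding w_def by metis
  show ?thesis
  proof (rule periodic_eventually_const[where f = x and p = p and a = a, OF _ periodic x_right])
    show "p > 0" "a \<le> t"
      using ab(1,2) by (simp_all add: p_def)
  qed
qed

lemma trivial_at_0_if_trivial_on_window:
  assumes x: "x \<in> N" and x_window: "\<And>n. 1 \<le> n \<Longrightarrow> n \<le> int M \<Longrightarrow> x n = \<one>"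
  shows "x 0 = \<one>"
proof -
  have "x 0 \<in> preceding_values M"
    unfolding preceding_values_def using x x_window by blast
  then obtain r where "r \<in> N" "r 0 = x 0" "\<And>n. n \<ge> 1 \<Longrightarrow> r n = \<one>"
    using preceding_value_extends[OF stable] by blast
  then show ?thesis
    using trivial_if_trivial_on_right by metis
qed

end

lemma ex_window_determining_value_at_0:
  obtains M :: nat where "\<And>x. x \<in> N \<Longrightarrow> (\<And>n. 1 \<le> n \<Longrightarrow> n \<le> int M \<Longrightarrow> x n = \<one>) \<Longrightarrow> x 0 = \<one>"
  using preceding_values_stabilize trivial_at_0_if_trivial_on_window by metis

end

definition reflect :: "(int \<Rightarrow> 'a) \<Rightarrow> int \<Rightarrow> 'a" where
  "reflect f = (\<lambda>n. f (- n))"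

lemma reflect_reflect [simp]: "reflect (reflect f) = f"
  by (simp add: reflect_def)

lemma continuous_map_reflect: "continuous_map (FZ_topology F) (FZ_topology F) reflect"
  unfolding FZ_topology_def continuous_map_componentwise_UNIV reflect_def
  by (auto intro: continuous_map_product_projection)

lemma (in sparse_group_shift) sparse_group_shift_reflect: "sparse_group_shift F (reflect ` N)"
proof unfold_locales
  show "finite (carrier F)"
    by (rule finite_carrier)
  show "x n \<in> carrier F" if "x \<in> reflect ` N" for x n
    using that N_carrier by (auto simp: reflect_def)
  show "(\<lambda>n. x n \<otimes> y n) \<in> reflect ` N" if xy: "x \<in> reflect ` N" "y \<in> reflect ` N" for x y
  proof -
    obtain a b where "a \<in> N" "b \<in> N" "x = reflect a" "y = reflect b"
      using xy by blast
    then show ?thesis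
      using N_mult[of a b] by (auto simp: reflect_def image_iff intro!: bexI[of _ "\<lambda>n. a n \<otimes> b n"])
  qed
  show "(\<lambda>n. inv (x n)) \<in> reflect ` N" if x: "x \<in> reflect ` N" for x
  proof -
    obtain a where "a \<in> N" "x = reflect a"
      using x by blast
    then show ?thesis
      using N_inv[of a] by (auto simp: reflect_def image_iff intro!: bexI[of _ "\<lambda>n. inv (a n)"])
  qed
  show "(\<lambda>n. x (n + k)) \<in> reflect ` N" if x: "x \<in> reflect ` N" for x k
  proof -
    obtain a where "a \<in> N" "x = reflect a"
      using x by blast
    then show ?thesis
      using N_translate[of a "- k"]
      by (auto simp: reflect_def image_iff intro!: bexI[of _ "\<lambda>n. a (n + - k)"])
  qed
  have "reflect ` N = {x \<in> topspace (FZ_topology F). reflect x \<in> N}"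
  proof (intro equalityI subsetI)
    show "x \<in> {x \<in> topspace (FZ_topology F). reflect x \<in> N}" if "x \<in> reflect ` N" for x
      using that N_carrier by (auto simp: topspace_FZ_topology carrier_FZ reflect_def)
    show "x \<in> reflect ` N" if "x \<in> {x \<in> topspace (FZ_topology F). reflect x \<in> N}" for x
      using that by (metis (no_types, lifting) imageI mem_Collect_eq reflect_reflect)
  qed
  then show "closedin (FZ_topology F) (reflect ` N)"
    using closedin_continuous_map_preimage[OF continuous_map_reflect N_closedin] by simp
  show "x = (\<lambda>n. \<one>)" if x: "x \<in> reflect ` N" "finite {n. x n \<noteq> \<one>}" for x
  proof -
    obtain a where a: "a \<in> N" "x = reflect a"
      using x(1) by blast
    have "{n. a n \<noteq> \<one>} = uminus ` {n. x n \<noteq> \<one>}"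
      using a(2) by (auto simp: reflect_def image_iff) (metis minus_minus)
    then have "a = (\<lambda>n. \<one>)"
      using N_fin_supp_trivial[OF a(1)] x(2) by simp
    then show ?thesis
      using a(2) by (simp add: reflect_def)
  qed
qed

context sparse_group_shift
begin

lemma ex_trivializing_window:
  obtains W :: nat where "\<And>x. x \<in> N \<Longrightarrow> (\<And>n. 1 \<le> n \<Longrightarrow> n \<le> int W \<Longrightarrow> x n = \<one>) \<Longrightarrow> x = (\<lambda>n. \<one>)"
proof -
  obtain R :: nat
    where R: "\<And>x. x \<in> N \<Longrightarrow> (\<And>n. 1 \<le> n \<Longrightarrow> n \<le> int R \<Longrightarrow> x n = \<one>) \<Longrightarrow> x 0 = \<one>"
    using ex_window_determining_value_at_0 by blast
  obtain L :: nat
    where L: "\<And>x. x \<in> reflect ` N \<Longrightarrow> (\<And>n. 1 \<le> n \<Longrightarrow> n \<le> int L \<Longrightarrow> x n = \<one>) \<Longrightarrow> x 0 = \<one>"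
    using sparse_group_shift.ex_window_determining_value_at_0[OF sparse_group_shift_reflect] by blast
  have "x m = \<one>" if x: "x \<in> N" and x_window: "\<And>n. 1 \<le> n \<Longrightarrow> n \<le> int (max R L) \<Longrightarrow> x n = \<one>" for x m
  proof (rule int_window_induct[OF x_window])
    show "x k = \<one>" if "\<And>n. k < n \<Longrightarrow> n \<le> k + int (max R L) \<Longrightarrow> x n = \<one>" for k
      using R[of "\<lambda>n. x (n + k)"] that N_translate[OF x] by simp
    show "x k = \<one>" if "\<And>n. k - int (max R L) \<le> n \<Longrightarrow> n < k \<Longrightarrow> x n = \<one>" for k
      using L[OF imageI[OF N_translate[OF x, of k]]] that by (simp add: reflect_def)
  qed
  then show ?thesis
    using that by blast
qed

lemma finite_N: "finite N"
proof -
  obtain W :: nat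
    where W: "\<And>x. x \<in> N \<Longrightarrow> (\<And>n. 1 \<le> n \<Longrightarrow> n \<le> int W \<Longrightarrow> x n = \<one>) \<Longrightarrow> x = (\<lambda>n. \<one>)"
    using ex_trivializing_window by blast
  have "inj_on (\<lambda>x. restrict x {1..int W}) N"
  proof (rule inj_onI)
    fix x y
    assume xy: "x \<in> N" "y \<in> N" "restrict x {1..int W} = restrict y {1..int W}"
    have "(\<lambda>n. x n \<otimes> inv (y n)) = (\<lambda>n. \<one>)"
    proof (rule W[OF N_div[OF xy(1,2)]])
      show "x n \<otimes> inv (y n) = \<one>" if "1 \<le> n" "n \<le> int W" for n
        using fun_cong[OF xy(3), of n] that N_carrier[OF xy(2)] by simp
    qed
    then show "x = y"
      using eq_if_div_eq_one N_carrier[OF xy(1)] N_carrier[OF xy(2)] by (metis ext)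
  qed
  moreover have "(\<lambda>x. restrict x {1..int W}) ` N \<subseteq> PiE {1..int W} (\<lambda>_. carrier F)"
    using N_carrier by (intro image_subsetI) (simp add: restrict_PiE_iff)
  then have "finite ((\<lambda>x. restrict x {1..int W}) ` N)"
    using finite_carrier by (meson finite_PiE finite_atLeastAtMost_int finite_subset)
  ultimately show ?thesis
    using finite_imageD by blast
qed

lemma commute_if_conjugate_in_N:
  assumes x: "x \<in> N" and a: "a \<in> carrier F"
    and conj: "(\<lambda>m. (if m = n then a else \<one>) \<otimes> x m \<otimes> inv (if m = n then a else \<one>)) \<in> N"
  shows "a \<otimes> x n = x n \<otimes> a"
proof -
  define e where "e = (\<lambda>m. (if m = n then a else \<one>) \<otimes> x m \<otimes> inv (if m = n then a else \<one>) \<otimes> inv (x m))"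
  have "e \<in> N"
    unfolding e_def by (rule N_div[OF conj x])
  moreover have "{m. e m \<noteq> \<one>} \<subseteq> {n}"
    using N_carrier[OF x] by (auto simp: e_def)
  ultimately have "e n = \<one>"
    using N_fin_supp_trivial finite_subset by (metis finite.emptyI finite.insertI)
  then have "a \<otimes> x n \<otimes> inv a = x n"
    using a N_carrier[OF x] eq_if_div_eq_one by (simp add: e_def)
  then show ?thesis
    using a N_carrier[OF x] by (metis inv_solve_right m_closed)
qed

end

lemma sparse_group_shift_if_subgroup:
  assumes "group F" "finite (carrier F)" "subgroup N (FZ F)"
    and "closedin (FZ_topology F) N" "shift ` N = N" "N \<inter> fin_supp F = {\<one>\<^bsub>FZ F\<^esub>}"
  shows "sparse_group_shift F N"
proof -
  interpret group F by fact
  interpret subgroup N "FZ F" by fact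
  show ?thesis
  proof unfold_locales
    show "x n \<in> carrier F" if "x \<in> N" for x n
      using that subset by (auto simp: carrier_FZ)
    show "(\<lambda>n. x n \<otimes>\<^bsub>F\<^esub> y n) \<in> N" if "x \<in> N" "y \<in> N" for x y
      using m_closed[OF that] by (simp add: mult_FZ)
    show "(\<lambda>n. inv\<^bsub>F\<^esub> (x n)) \<in> N" if "x \<in> N" for x
      using m_inv_closed[OF that] inv_FZ[OF assms(1)] that subset by auto
    show "(\<lambda>n. x (n + k)) \<in> N" if "x \<in> N" for x k
      using translate_mem_if_shift_stable[OF assms(5) that] .
    show "x = (\<lambda>n. \<one>\<^bsub>F\<^esub>)" if "x \<in> N" "finite {n. x n \<noteq> \<one>\<^bsub>F\<^esub>}" for x
      using that subset assms(6) by (auto simp: fin_supp_def one_FZ)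
  qed (use assms in auto)
qed

lemma subset_center_if_normal:
  assumes "sparse_group_shift F N" "N \<lhd> FZ F"
  shows "N \<subseteq> center (FZ F)"
proof
  interpret sparse_group_shift F N by fact
  interpret normal N "FZ F" by fact
  have F: "group F"
    using assms(1) by (simp add: sparse_group_shift_def group_shift_def)
  fix x assume x: "x \<in> N"
  have "x n \<otimes>\<^bsub>F\<^esub> h n = h n \<otimes>\<^bsub>F\<^esub> x n" if h: "h \<in> carrier (FZ F)" for h n
  proof -
    define d where "d = (\<lambda>m. if m = n then h n else \<one>\<^bsub>F\<^esub>)"
    have d: "d \<in> carrier (FZ F)"
      using h by (auto simp: d_def carrier_FZ)
    have "d \<otimes>\<^bsub>FZ F\<^esub> x \<otimes>\<^bsub>FZ F\<^esub> inv\<^bsub>FZ F\<^esub> d \<in> N"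
      by (rule inv_op_closed2[OF d x])
    then have "(\<lambda>m. d m \<otimes>\<^bsub>F\<^esub> x m \<otimes>\<^bsub>F\<^esub> inv\<^bsub>F\<^esub> (d m)) \<in> N"
      by (simp add: inv_FZ[OF F d] mult_FZ)
    moreover have "h n \<in> carrier F"
      using h by (simp add: carrier_FZ)
    ultimately have "h n \<otimes>\<^bsub>F\<^esub> x n = x n \<otimes>\<^bsub>F\<^esub> h n"
      unfolding d_def by (rule commute_if_conjugate_in_N[OF x, rotated])
    then show ?thesis
      by (rule sym)
  qed
  then show "x \<in> center (FZ F)"
    using x subset by (auto simp: center_def mult_FZ)
qed

theorem lemma6p7:
  fixes F :: "('a, 'b) monoid_scheme" and N :: "(int \<Rightarrow> 'a) set"
  assumes "group F"
    and "finite (carrier F)"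
    and "N \<lhd> FZ F"
    and "closedin (FZ_topology F) N"
    and "shift ` N = N"
    and "N \<inter> fin_supp F = {\<one>\<^bsub>FZ F\<^esub>}"
  shows "finite N \<and> N \<subseteq> center (FZ F)"
proof -
  have "sparse_group_shift F N"
    using assms normal_imp_subgroup by (intro sparse_group_shift_if_subgroup)
  then show ?thesis
    using assms(3) sparse_group_shift.finite_N subset_center_if_normal by blast
qed

end
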